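(* Let $k$ be a positive integer and let $G$ be a $2k$-connected $(P_2\cup kP_1)$-free graph. Let $u,v$ be distinct vertices of $G$, let $P$ be a longest $(u,v)$-path in $G$, oriented from $u$ to $v$, and suppose $V(P)\neq V(G)$. Let $x\in V(G)\setminus V(P)$ and write $N_P(x)=\{x_1,\dots,x_t\}$ in the order of appearance on $P$ from $u$ to $v$. For $i\in\{1,\dots,t-1\}$ let $S_i$ be the set of vertices of $P$ strictly between $x_i$ and $x_{i+1}$. Then for every $i\in\{1,\dots,t-1\}$ and every odd integer $j$ with $1\le j\le |S_i|$, the vertex $x_i^{+j}$ has no neighbor in $N_P(x)^+$.
   Context: All graphs are finite and simple. For a graph $H$, a graph $G$ is $H$-free if $G$ contains no induced subgraph isomorphic to $H$; $P_2\cup kP_1$ is the disjoint union of an edge and $k$ isolated vertices. A $(u,v)$-path is a path with endpoints $u$ and $v$. $N_P(y)$ is the set of neighbors of $y$ lying on $P$. For a vertex $w$ of the oriented path $P$, $w^{+}$ is its successor on $P$ and $w^{+\ell}$ denotes the successor of $w^{+(\ell-1)}$. For $S\subseteq V(P)$, $S^+=\{w^+: w\in S\setminus\{v\}\}$. *)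

theory Defs
  imports Main
begin

definition simple_graph :: "'a set \<Rightarrow> ('a \<Rightarrow> 'a \<Rightarrow> bool) \<Rightarrow> bool" where
  "simple_graph V E \<longleftrightarrow> finite V \<and> (\<forall>x y. E x y \<longrightarrow> E y x) \<and> (\<forall>x. \<not> E x x)
     \<and> (\<forall>x y. E x y \<longrightarrow> x \<in> V \<and> y \<in> V)"

definition connected_on :: "'a set \<Rightarrow> ('a \<Rightarrow> 'a \<Rightarrow> bool) \<Rightarrow> bool" where
  "connected_on W E \<longleftrightarrow>
     (\<forall>x\<in>W. \<forall>y\<in>W. (\<lambda>a b. a \<in> W \<and> b \<in> W \<and> E a b)\<^sup>*\<^sup>* x y)"

definition k_connected :: "'a set \<Rightarrow> ('a \<Rightarrow> 'a \<Rightarrow> bool) \<Rightarrow> nat \<Rightarrow> bool" where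
  "k_connected V E k \<longleftrightarrow> card V > k \<and>
     (\<forall>S. S \<subseteq> V \<and> card S < k \<longrightarrow> connected_on (V - S) E)"

definition has_induced :: "'a set \<Rightarrow> ('a \<Rightarrow> 'a \<Rightarrow> bool) \<Rightarrow> nat \<Rightarrow> (nat \<Rightarrow> nat \<Rightarrow> bool) \<Rightarrow> bool" where
  "has_induced V E n HE \<longleftrightarrow> (\<exists>f. inj_on f {0..<n} \<and> f ` {0..<n} \<subseteq> V \<and>
     (\<forall>i\<in>{0..<n}. \<forall>j\<in>{0..<n}. E (f i) (f j) \<longleftrightarrow> HE i j))"

definition P2_kP1_adj :: "nat \<Rightarrow> nat \<Rightarrow> bool" where
  "P2_kP1_adj i j \<longleftrightarrow> {i, j} = {0, 1::nat}"

definition P2_kP1_free :: "'a set \<Rightarrow> ('a \<Rightarrow> 'a \<Rightarrow> bool) \<Rightarrow> nat \<Rightarrow> bool" where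
  "P2_kP1_free V E k \<longleftrightarrow> \<not> has_induced V E (k + 2) P2_kP1_adj"

definition is_path :: "'a set \<Rightarrow> ('a \<Rightarrow> 'a \<Rightarrow> bool) \<Rightarrow> 'a list \<Rightarrow> bool" where
  "is_path V E P \<longleftrightarrow> P \<noteq> [] \<and> distinct P \<and> set P \<subseteq> V \<and>
     (\<forall>i. Suc i < length P \<longrightarrow> E (P ! i) (P ! Suc i))"

definition is_uv_path :: "'a set \<Rightarrow> ('a \<Rightarrow> 'a \<Rightarrow> bool) \<Rightarrow> 'a \<Rightarrow> 'a \<Rightarrow> 'a list \<Rightarrow> bool" where
  "is_uv_path V E u v P \<longleftrightarrow> is_path V E P \<and> hd P = u \<and> last P = v"

definition longest_uv_path :: "'a set \<Rightarrow> ('a \<Rightarrow> 'a \<Rightarrow> bool) \<Rightarrow> 'a \<Rightarrow> 'a \<Rightarrow> 'a list \<Rightarrow> bool" where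
  "longest_uv_path V E u v P \<longleftrightarrow> is_uv_path V E u v P \<and>
     (\<forall>Q. is_uv_path V E u v Q \<longrightarrow> length Q \<le> length P)"

text \<open>N_P(x)^+: successors on P of the neighbours of x on P (the last vertex v has no
  successor and is excluded).\<close>
definition NP_plus :: "('a \<Rightarrow> 'a \<Rightarrow> bool) \<Rightarrow> 'a list \<Rightarrow> 'a \<Rightarrow> 'a set" where
  "NP_plus E P x = {P ! Suc c | c. Suc c < length P \<and> E x (P ! c)}"

end

theory Submission
  imports Defs "HOL-Library.Multiset"
begin

(* Let A be the set of positions of the neighbours of x on P, so that N_P(x)^+ consists of the
   vertices P!(p+1), p \<in> A. Rerouting the longest path shows that x together with N_P(x)^+ is
   independent and, applied to the component of G - P containing x, that every neighbour of x lies
   on P; 2k-connectivity then gives |A| \<ge> 2k - 1.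
   The claim is proved for j = 1, 3, 5, ... by induction. Suppose w = P!(a+j+2) is adjacent to P!(p0+1)
   for some p0 \<in> A, and let X and Y be the positions p \<in> A with P!(p+1) adjacent to
   P!(a+j+1) and to w respectively. With the edge P!(a+j) P!(a+j+1), respectively w P!(p0+1), the
   vertex x and the successors outside X, respectively Y, would span an induced P_2 \<union> kP_1
   unless |A - X| and |A - Y| are at most k - 2. Two positions of X \<inter> Y on the same side of the
   gap between P!a and P!b would yield a longer path through x, so |X \<inter> Y| \<le> 2. Hence
   2|A| - 2k + 4 \<le> |X| + |Y| \<le> |A| + 2, contradicting |A| \<ge> 2k - 1. *)

lemma is_path_iff_successively:
  "is_path V E P \<longleftrightarrow> P \<noteq> [] \<and> distinct P \<and> set P \<subseteq> V \<and> successively E P"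
  unfolding is_path_def successively_conv_nth by blast

lemma has_induced_P2_kP1I:
  assumes graph: "simple_graph V E" and st: "E s t"
    and S: "S \<subseteq> V" "finite S" "k \<le> card S"
    and indep: "\<forall>a\<in>S. \<forall>b\<in>S. \<not> E a b" and apart: "\<forall>a\<in>S. \<not> E s a \<and> \<not> E t a"
  shows "has_induced V E (k + 2) P2_kP1_adj"
proof -
  obtain T where T: "T \<subseteq> S" "card T = k"
    using obtain_subset_with_card_n[OF S(3)] by blast
  obtain xs where xs: "set xs = T" "distinct xs"
    using finite_distinct_list[OF finite_subset[OF T(1) S(2)]] by blast
  have sym: "E a b \<longleftrightarrow> E b a" and irrefl: "\<not> E a a" and EV: "E a b \<Longrightarrow> a \<in> V \<and> b \<in> V" for a b
    using graph unfolding simple_graph_def by blast+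
  have apart': "\<forall>a\<in>S. \<not> E a s \<and> \<not> E a t"
    using apart sym by blast
  let ?L = "s # t # xs"
  have "s \<notin> S" "t \<notin> S" "s \<noteq> t" using apart st sym irrefl by blast+
  then have L: "distinct ?L" "length ?L = k + 2" "set ?L \<subseteq> V"
    using xs T S(1) EV[OF st] distinct_card[OF xs(2)] by auto
  have in_S: "?L ! i \<in> S" if "2 \<le> i" "i < k + 2" for i
  proof -
    obtain m where "i = Suc (Suc m)" using \<open>2 \<le> i\<close> by (metis add_2_eq_Suc le_Suc_ex)
    then show ?thesis using that L(2) xs T(1) by auto
  qed
  have "E (?L ! i) (?L ! j) \<longleftrightarrow> P2_kP1_adj i j" if "i < k + 2" "j < k + 2" for i j
  proof -
    have "i = 0 \<or> i = 1 \<or> 2 \<le> i" "j = 0 \<or> j = 1 \<or> 2 \<le> j" by auto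
    then show ?thesis
      using in_S[OF _ that(1)] in_S[OF _ that(2)] st sym[of s t] irrefl indep apart apart'
      unfolding P2_kP1_adj_def by (auto simp: doubleton_eq_iff)
  qed
  then show ?thesis
    unfolding has_induced_def using L
    by (intro exI[of _ "nth ?L"]) (auto intro: inj_on_nth nth_mem[THEN subsetD[OF L(3)]] simp del: nth_Cons_Suc)
qed

lemma k_connected_card_neighbours_ge:
  assumes graph: "simple_graph V E" and conn: "k_connected V E k" and x: "x \<in> V"
  shows "k \<le> card {y. E x y}"
proof (rule ccontr)
  define N where "N = {y. E x y}"
  assume "\<not> k \<le> card {y. E x y}"
  then have small: "card N < k" unfolding N_def by simp
  have N: "N \<subseteq> V" "x \<notin> N" "finite V" using graph unfolding simple_graph_def N_def by auto
  have "connected_on (V - N) E" "k < card V" using conn small N unfolding k_connected_def by auto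
  moreover have "2 \<le> card (V - N)"
    using card_Diff_subset[OF finite_subset[OF N(1,3)] N(1)] small \<open>k < card V\<close> by linarith
  then obtain z1 z2 where "z1 \<in> V - N" "z2 \<in> V - N" "z1 \<noteq> z2"
    using card_le_Suc0_iff_eq[of "V - N"] N(3) by force
  then obtain z where z: "z \<in> V - N" "z \<noteq> x" by blast
  ultimately have "(\<lambda>a b. a \<in> V - N \<and> b \<in> V - N \<and> E a b)\<^sup>*\<^sup>* x z"
    using x N(2) unfolding connected_on_def by blast
  then show False
    using z by (cases rule: converse_rtranclpE) (auto simp: N_def)
qed

lemma last_take_Suc: "n < length xs \<Longrightarrow> last (take (Suc n) xs) = xs ! n"
  by (simp add: take_Suc_conv_app_nth)

lemma successively_take: "successively R xs \<Longrightarrow> successively R (take n xs)"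
  by (metis append_take_drop_id successively_append_iff)

lemma successively_drop: "successively R xs \<Longrightarrow> successively R (drop n xs)"
  by (metis append_take_drop_id successively_append_iff)

lemma rtranclp_restricted_imp_path:
  assumes "(\<lambda>a b. a \<in> W \<and> b \<in> W \<and> E a b)\<^sup>*\<^sup>* a b" and "a \<in> W"
  shows "\<exists>Q. Q \<noteq> [] \<and> distinct Q \<and> set Q \<subseteq> W \<and> successively E Q \<and> hd Q = a \<and> last Q = b"
  using assms(1)
proof (induction rule: rtranclp_induct)
  case base
  show ?case using assms(2) by (intro exI[of _ "[a]"]) auto
next
  case (step b c)
  then obtain Q where Q: "Q \<noteq> []" "distinct Q" "set Q \<subseteq> W" "successively E Q" "hd Q = a" "last Q = b"
    by blast
  show ?case
  proof (cases "c \<in> set Q")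
    case True
    then obtain i where i: "i < length Q" "Q ! i = c" by (auto simp: in_set_conv_nth)
    have "last (take (Suc i) Q) = c" using i by (simp add: last_take_Suc)
    with Q i show ?thesis
      by (intro exI[of _ "take (Suc i) Q"]) (auto simp: successively_take dest: in_set_takeD)
  next
    case False
    with Q step show ?thesis
      by (intro exI[of _ "Q @ [c]"]) (auto simp: successively_append_iff)
  qed
qed

definition segment :: "nat \<Rightarrow> nat \<Rightarrow> 'a list \<Rightarrow> 'a list" where
  "segment i j xs = drop i (take j xs)"

lemma take_append_segment: "i \<le> j \<Longrightarrow> take i xs @ segment i j xs = take j xs"
  unfolding segment_def by (metis append_take_drop_id min.absorb1 take_take)

lemma segment_append_segment:
  assumes "i \<le> j" "j \<le> l"
  shows "segment i j xs @ segment j l xs = segment i l xs"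
proof -
  have "segment i l xs = drop i (take j xs @ segment j l xs)"
    using arg_cong[OF take_append_segment[OF assms(2), of xs], of "drop i"] by (simp add: segment_def)
  then show ?thesis
    using assms(1) by (cases "j \<le> length xs") (auto simp: drop_append segment_def)
qed

lemma take_segment_drop: "i \<le> j \<Longrightarrow> take i xs @ segment i j xs @ drop j xs = xs"
  by (metis append.assoc append_take_drop_id take_append_segment)

lemma segment_nonempty: "i < j \<Longrightarrow> j \<le> length xs \<Longrightarrow> segment i j xs \<noteq> []"
  unfolding segment_def by simp

lemma hd_segment: "i < j \<Longrightarrow> j \<le> length xs \<Longrightarrow> hd (segment i j xs) = xs ! i"
  unfolding segment_def by (simp add: hd_drop_conv_nth)

lemma last_segment: "i < j \<Longrightarrow> j \<le> length xs \<Longrightarrow> last (segment i j xs) = xs ! (j - 1)"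
  unfolding segment_def by (simp add: last_conv_nth)

lemma successively_segment: "successively R xs \<Longrightarrow> successively R (segment i j xs)"
  unfolding segment_def by (metis append_take_drop_id successively_append_iff)

locale longest_path =
  fixes V :: "'a set" and E :: "'a \<Rightarrow> 'a \<Rightarrow> bool" and u v :: 'a and P :: "'a list"
  assumes graph: "simple_graph V E" and longest: "longest_uv_path V E u v P"
begin

lemma edge_commute: "E a b \<longleftrightarrow> E b a"
  using graph unfolding simple_graph_def by blast

lemma edge_irrefl: "\<not> E a a"
  using graph unfolding simple_graph_def by blast

lemma edge_in_V: "E a b \<Longrightarrow> a \<in> V \<and> b \<in> V"
  using graph unfolding simple_graph_def by blast

lemma converse_edge [simp]: "(\<lambda>a b. E b a) = E"
  using edge_commute by blast

lemma path: "P \<noteq> []" "distinct P" "set P \<subseteq> V" "successively E P" "hd P = u" "last P = v"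
  using longest unfolding longest_uv_path_def is_uv_path_def is_path_iff_successively by auto

lemma path_edge: "Suc i < length P \<Longrightarrow> E (P ! i) (P ! Suc i)"
  using successively_nth[OF path(4)] .

lemma no_longer_rerouting:
  assumes Q: "Q \<noteq> []" "distinct Q" "set Q \<subseteq> V" "set Q \<inter> set P = {}"
    and L: "mset L = mset P + mset Q" "successively E L" "hd L = u" "last L = v"
  shows False
proof -
  have PQ: "mset L = mset (P @ Q)" using L(1) by simp
  have "distinct (P @ Q)" using path Q by auto
  then have "is_uv_path V E u v L"
    using mset_eq_imp_distinct_iff[OF PQ] mset_eq_setD[OF PQ] path Q L
    unfolding is_uv_path_def is_path_iff_successively by auto
  then have "length L \<le> length P" using longest unfolding longest_uv_path_def by blast
  then show False using mset_eq_length[OF PQ] Q(1) by simp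
qed

lemma no_detour_across_edge:
  assumes Q: "is_uv_path V E h1 h2 Q" "set Q \<inter> set P = {}"
    and a: "Suc a < length P" "E (P ! a) h1" "E h2 (P ! Suc a)"
  shows False
proof -
  let ?A = "take (Suc a) P" and ?B = "drop (Suc a) P"
  have Q': "Q \<noteq> []" "distinct Q" "set Q \<subseteq> V" "successively E Q" "hd Q = h1" "last Q = h2"
    using Q(1) unfolding is_uv_path_def is_path_iff_successively by auto
  show False
  proof (rule no_longer_rerouting[OF Q'(1-3) Q(2), of "?A @ Q @ ?B"])
    show "mset (?A @ Q @ ?B) = mset P + mset Q"
      by (metis append_take_drop_id mset_append add.commute add.left_commute)
    have ends: "last ?A = P ! a" "hd ?B = P ! Suc a" "?A \<noteq> []" "?B \<noteq> []"
      using a(1) by (auto simp: last_take_Suc hd_drop_conv_nth)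
    show "successively E (?A @ Q @ ?B)"
      using a Q' ends successively_take[OF path(4)] successively_drop[OF path(4)]
      by (simp add: successively_append_iff)
  qed (use path a in auto)
qed

lemma no_crossing_detour:
  assumes Q: "is_uv_path V E h1 h2 Q" "set Q \<inter> set P = {}"
    and ab: "a < b" "Suc b < length P" "E (P ! a) h1" "E h2 (P ! b)" "E (P ! Suc a) (P ! Suc b)"
  shows False
proof -
  let ?A = "take (Suc a) P" and ?S = "segment (Suc a) (Suc b) P" and ?B = "drop (Suc b) P"
  have Q': "Q \<noteq> []" "distinct Q" "set Q \<subseteq> V" "successively E Q" "hd Q = h1" "last Q = h2"
    using Q(1) unfolding is_uv_path_def is_path_iff_successively by auto
  show False
  proof (rule no_longer_rerouting[OF Q'(1-3) Q(2), of "?A @ Q @ rev ?S @ ?B"])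
    have "mset P = mset (?A @ ?S @ ?B)"
      using take_segment_drop[of "Suc a" "Suc b" P] ab(1) by simp
    then show "mset (?A @ Q @ rev ?S @ ?B) = mset P + mset Q" by simp
    have ends: "last ?A = P ! a" "hd ?S = P ! Suc a" "last ?S = P ! b" "hd ?B = P ! Suc b"
      "?A \<noteq> []" "?S \<noteq> []" "?B \<noteq> []"
      using ab by (auto simp: last_take_Suc hd_drop_conv_nth hd_segment last_segment segment_nonempty)
    show "successively E (?A @ Q @ rev ?S @ ?B)"
      using ab Q' ends successively_take[OF path(4)] successively_drop[OF path(4)]
        successively_segment[OF path(4)]
      by (simp add: successively_append_iff successively_Cons hd_rev last_rev edge_commute)
  qed (use path ab in auto)
qed

(* The longer path: u ... P!p, x, P!p' ... P!(p+1), P!q ... P!(p'+1), P!(q+1) ... v. *)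
lemma no_chord_pair_before:
  assumes x: "x \<in> V - set P"
    and p: "p < p'" "p' < q" "Suc q < length P" "E x (P ! p)" "E x (P ! p')"
      "E (P ! Suc p) (P ! q)" "E (P ! Suc p') (P ! Suc q)"
  shows False
proof -
  let ?A = "take (Suc p) P" and ?S1 = "segment (Suc p) (Suc p') P"
    and ?S2 = "segment (Suc p') (Suc q) P" and ?B = "drop (Suc q) P"
  show False
  proof (rule no_longer_rerouting[of "[x]" "?A @ [x] @ rev ?S1 @ rev ?S2 @ ?B"])
    have "?S1 @ ?S2 = segment (Suc p) (Suc q) P" "?A @ segment (Suc p) (Suc q) P @ ?B = P"
      using p by (auto intro: segment_append_segment take_segment_drop)
    then have "mset P = mset (?A @ ?S1 @ ?S2 @ ?B)" by (metis append.assoc)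
    then show "mset (?A @ [x] @ rev ?S1 @ rev ?S2 @ ?B) = mset P + mset [x]" by simp
    have ends: "last ?A = P ! p" "hd ?S1 = P ! Suc p" "last ?S1 = P ! p'"
      "hd ?S2 = P ! Suc p'" "last ?S2 = P ! q" "hd ?B = P ! Suc q"
      "?A \<noteq> []" "?S1 \<noteq> []" "?S2 \<noteq> []" "?B \<noteq> []"
      using p by (auto simp: last_take_Suc hd_drop_conv_nth hd_segment last_segment segment_nonempty)
    show "successively E (?A @ [x] @ rev ?S1 @ rev ?S2 @ ?B)"
      using p ends successively_take[OF path(4)] successively_drop[OF path(4)]
        successively_segment[OF path(4)]
      by (simp add: successively_append_iff successively_Cons hd_rev last_rev edge_commute)
  qed (use x path p in auto)
qed

(* The longer path: u ... P!q, P!(p+1) ... P!p', x, P!p ... P!(q+1), P!(p'+1) ... v. *)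
lemma no_chord_pair_after:
  assumes x: "x \<in> V - set P"
    and p: "q < p" "p < p'" "Suc p' < length P" "E x (P ! p)" "E x (P ! p')"
      "E (P ! q) (P ! Suc p)" "E (P ! Suc q) (P ! Suc p')"
  shows False
proof -
  let ?A = "take (Suc q) P" and ?S1 = "segment (Suc q) (Suc p) P"
    and ?S2 = "segment (Suc p) (Suc p') P" and ?B = "drop (Suc p') P"
  show False
  proof (rule no_longer_rerouting[of "[x]" "?A @ ?S2 @ [x] @ rev ?S1 @ ?B"])
    have "?S1 @ ?S2 = segment (Suc q) (Suc p') P" "?A @ segment (Suc q) (Suc p') P @ ?B = P"
      using p by (auto intro: segment_append_segment take_segment_drop)
    then have "mset P = mset (?A @ ?S1 @ ?S2 @ ?B)" by (metis append.assoc)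
    then show "mset (?A @ ?S2 @ [x] @ rev ?S1 @ ?B) = mset P + mset [x]" by simp
    have ends: "last ?A = P ! q" "hd ?S1 = P ! Suc q" "last ?S1 = P ! p"
      "hd ?S2 = P ! Suc p" "last ?S2 = P ! p'" "hd ?B = P ! Suc p'"
      "?A \<noteq> []" "?S1 \<noteq> []" "?S2 \<noteq> []" "?B \<noteq> []"
      using p by (auto simp: last_take_Suc hd_drop_conv_nth hd_segment last_segment segment_nonempty)
    show "successively E (?A @ ?S2 @ [x] @ rev ?S1 @ ?B)"
      using p ends successively_take[OF path(4)] successively_drop[OF path(4)]
        successively_segment[OF path(4)]
      by (simp add: successively_append_iff successively_Cons hd_rev last_rev edge_commute)
  qed (use x path p in auto)
qed

(* Positions of the vertices of P adjacent to H, except the last one; the successors of these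
   positions form the set N_P(H)^+ of the paper. *)
definition attach_pos :: "'a set \<Rightarrow> nat set" where
  "attach_pos H = {p. Suc p < length P \<and> (\<exists>h\<in>H. E h (P ! p))}"

definition linked_off_path :: "'a set \<Rightarrow> bool" where
  "linked_off_path H \<longleftrightarrow> (\<forall>h1\<in>H. \<forall>h2\<in>H. \<exists>Q. is_uv_path V E h1 h2 Q \<and> set Q \<inter> set P = {})"

lemma attach_successors_nonadjacent:
  assumes H: "linked_off_path H" and pq: "p \<in> attach_pos H" "q \<in> attach_pos H"
  shows "\<not> E (P ! Suc p) (P ! Suc q)"
proof -
  have crossing: False
    if cross: "p < q" "p \<in> attach_pos H" "q \<in> attach_pos H" "E (P ! Suc p) (P ! Suc q)" for p q
  proof -
    obtain h1 h2 where h: "h1 \<in> H" "h2 \<in> H" "E (P ! p) h1" "E h2 (P ! q)" "Suc q < length P"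
      using cross(2,3) unfolding attach_pos_def by (auto simp: edge_commute)
    then obtain Q where "is_uv_path V E h1 h2 Q" "set Q \<inter> set P = {}"
      using H unfolding linked_off_path_def by blast
    then show False using no_crossing_detour h cross(1,4) by blast
  qed
  show ?thesis
    using crossing[of p q] crossing[of q p] pq edge_irrefl edge_commute
    by (cases p q rule: linorder_cases) auto
qed

lemma attach_successor_nonadjacent:
  assumes H: "linked_off_path H" "h \<in> H" and p: "p \<in> attach_pos H"
  shows "\<not> E h (P ! Suc p)"
proof
  assume "E h (P ! Suc p)"
  moreover obtain h' where "h' \<in> H" "E (P ! p) h'" "Suc p < length P"
    using p unfolding attach_pos_def by (auto simp: edge_commute)
  moreover obtain Q where "is_uv_path V E h' h Q" "set Q \<inter> set P = {}"
    using H \<open>h' \<in> H\<close> unfolding linked_off_path_def by blast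
  ultimately show False using no_detour_across_edge by blast
qed

lemma finite_attach_pos: "finite (attach_pos H)"
  by (rule finite_subset[of _ "{..<length P}"]) (auto simp: attach_pos_def)

lemma inj_on_successor: "inj_on (\<lambda>p. P ! Suc p) (attach_pos H)"
  using path(2) by (auto simp: inj_on_def attach_pos_def nth_eq_iff_index_eq)

lemma attach_successors_on_path: "(\<lambda>p. P ! Suc p) ` attach_pos H \<subseteq> set P"
  by (auto simp: attach_pos_def)

lemma card_attachments_le: "card {z \<in> set P. \<exists>h\<in>H. E h z} \<le> card (attach_pos H) + 1"
proof -
  have "{z \<in> set P. \<exists>h\<in>H. E h z} \<subseteq> (\<lambda>p. P ! p) ` insert (length P - 1) (attach_pos H)"
  proof
    fix z assume "z \<in> {z \<in> set P. \<exists>h\<in>H. E h z}"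
    then obtain i where "i < length P" "z = P ! i" "\<exists>h\<in>H. E h (P ! i)"
      by (auto simp: in_set_conv_nth)
    then have "i \<in> insert (length P - 1) (attach_pos H)"
      by (cases "Suc i < length P") (auto simp: attach_pos_def)
    then show "z \<in> (\<lambda>p. P ! p) ` insert (length P - 1) (attach_pos H)"
      using \<open>z = P ! i\<close> by blast
  qed
  then have "card {z \<in> set P. \<exists>h\<in>H. E h z} \<le> card (insert (length P - 1) (attach_pos H))"
    using finite_attach_pos by (meson card_image_le card_mono finite.insertI finite_imageI order_trans)
  also have "\<dots> \<le> card (attach_pos H) + 1" by (simp add: card_insert_le_m1)
  finally show ?thesis .
qed

lemma linked_off_path_singleton: "x \<in> V - set P \<Longrightarrow> linked_off_path {x}"
  unfolding linked_off_path_def is_uv_path_def is_path_def by (intro ballI exI[of _ "[x]"]) auto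

definition off_path_component :: "'a \<Rightarrow> 'a set" where
  "off_path_component x = {h. (\<lambda>a b. a \<in> V - set P \<and> b \<in> V - set P \<and> E a b)\<^sup>*\<^sup>* x h}"

lemma off_path_component_subset:
  assumes "x \<in> V - set P"
  shows "off_path_component x \<subseteq> V - set P"
proof
  fix h assume "h \<in> off_path_component x"
  then have "(\<lambda>a b. a \<in> V - set P \<and> b \<in> V - set P \<and> E a b)\<^sup>*\<^sup>* x h"
    unfolding off_path_component_def by simp
  then show "h \<in> V - set P" by (induction rule: rtranclp_induct) (use assms in auto)
qed

lemma linked_off_path_component:
  assumes x: "x \<in> V - set P"
  shows "linked_off_path (off_path_component x)"
  unfolding linked_off_path_def
proof (intro ballI)
  let ?R = "\<lambda>a b. a \<in> V - set P \<and> b \<in> V - set P \<and> E a b"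
  fix h1 h2 assume h: "h1 \<in> off_path_component x" "h2 \<in> off_path_component x"
  have "symp ?R" by (rule sympI) (simp add: edge_commute)
  moreover have "?R\<^sup>*\<^sup>* x h1" "?R\<^sup>*\<^sup>* x h2"
    using h unfolding off_path_component_def by simp_all
  ultimately have walk: "?R\<^sup>*\<^sup>* h1 h2"
    by (meson rtranclp_trans sympD symp_rtranclp)
  have "h1 \<in> V - set P" using off_path_component_subset[OF x] h(1) by blast
  from rtranclp_restricted_imp_path[OF walk this]
  obtain Q where "Q \<noteq> []" "distinct Q" "set Q \<subseteq> V - set P" "successively E Q"
    "hd Q = h1" "last Q = h2"
    by blast
  then show "\<exists>Q. is_uv_path V E h1 h2 Q \<and> set Q \<inter> set P = {}"
    unfolding is_uv_path_def is_path_iff_successively by (intro exI[of _ Q]) auto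
qed

lemma card_attachments_ge:
  assumes conn: "k_connected V E m" and uv: "u \<noteq> v" and x: "x \<in> V - set P"
  shows "m \<le> card {z \<in> set P. \<exists>h\<in>off_path_component x. E h z}" (is "_ \<le> card ?Z")
proof (rule ccontr)
  let ?H = "off_path_component x"
  assume "\<not> m \<le> card ?Z"
  moreover have "?Z \<subseteq> V" using path(3) by blast
  ultimately have conn_Z: "connected_on (V - ?Z) E"
    using conn unfolding k_connected_def by simp
  have "Suc 0 < length P"
    using path(1,5,6) uv by (cases P) (auto simp: last_conv_nth)
  have "P ! 0 \<notin> ?Z \<or> P ! 1 \<notin> ?Z"
  proof (rule ccontr)
    assume "\<not> (P ! 0 \<notin> ?Z \<or> P ! 1 \<notin> ?Z)"
    then obtain h1 h2 where h: "h1 \<in> ?H" "h2 \<in> ?H" "E (P ! 0) h1" "E h2 (P ! Suc 0)"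
      by (auto simp: edge_commute)
    then obtain Q where "is_uv_path V E h1 h2 Q" "set Q \<inter> set P = {}"
      using linked_off_path_component[OF x] unfolding linked_off_path_def by blast
    then show False using no_detour_across_edge h(3,4) \<open>Suc 0 < length P\<close> by blast
  qed
  moreover have "P ! 0 \<in> set P" "P ! 1 \<in> set P"
    using nth_mem Suc_lessD \<open>Suc 0 < length P\<close> One_nat_def by metis+
  ultimately obtain z where z: "z \<in> set P" "z \<notin> ?Z" by blast
  then have "z \<in> V - ?Z" using path(3) by blast
  then have "(\<lambda>a b. a \<in> V - ?Z \<and> b \<in> V - ?Z \<and> E a b)\<^sup>*\<^sup>* x z"
    using conn_Z x unfolding connected_on_def by blast
  then have "z \<in> ?H"
  proof (induction rule: rtranclp_induct)
    case base
    then show ?case by (simp add: off_path_component_def)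
  next
    case (step w w')
    then have "w' \<in> V - set P" by auto
    with step off_path_component_subset[OF x] show ?case
      unfolding off_path_component_def by (auto intro: rtranclp.rtrancl_into_rtrancl)
  qed
  then show False using off_path_component_subset[OF x] z(1) by blast
qed

lemma neighbours_on_path:
  assumes free: "P2_kP1_free V E k" and k: "1 \<le> k" and conn: "k_connected V E (2 * k)"
    and uv: "u \<noteq> v" and x: "x \<in> V - set P" and xy: "E x y"
  shows "y \<in> set P"
proof (rule ccontr)
  let ?H = "off_path_component x"
  let ?S = "(\<lambda>p. P ! Suc p) ` attach_pos ?H"
  assume "y \<notin> set P"
  then have H: "linked_off_path ?H" "x \<in> ?H" "y \<in> ?H"
    using linked_off_path_component[OF x] x xy edge_in_V[OF xy]
    by (auto simp: off_path_component_def)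
  have "k \<le> card ?S"
    using card_attachments_ge[OF conn uv x] card_attachments_le[of ?H]
      card_image[OF inj_on_successor[of ?H]] k by linarith
  moreover have "?S \<subseteq> V" using attach_successors_on_path path(3) by blast
  ultimately have "has_induced V E (k + 2) P2_kP1_adj"
    using finite_attach_pos attach_successors_nonadjacent[OF H(1)]
      attach_successor_nonadjacent[OF H(1,2)] attach_successor_nonadjacent[OF H(1,3)]
    by (intro has_induced_P2_kP1I[OF graph xy, of ?S]) auto
  then show False using free unfolding P2_kP1_free_def by blast
qed

lemma card_neighbour_positions_ge:
  assumes free: "P2_kP1_free V E k" and k: "1 \<le> k" and conn: "k_connected V E (2 * k)"
    and uv: "u \<noteq> v" and x: "x \<in> V - set P"
  shows "2 * k \<le> card (attach_pos {x}) + 1"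
proof -
  have "{y. E x y} = {z \<in> set P. \<exists>h\<in>{x}. E h z}"
    using neighbours_on_path[OF free k conn uv x] by auto
  then show ?thesis
    using k_connected_card_neighbours_ge[OF graph conn, of x] card_attachments_le[of "{x}"] x
    by simp
qed

lemma card_successors_avoiding_edge_less:
  assumes free: "P2_kP1_free V E k" and x: "x \<in> V - set P" and B: "B \<subseteq> attach_pos {x}"
    and st: "E s t" "\<not> E x s" "\<not> E x t"
    and apart: "\<forall>p\<in>B. \<not> E s (P ! Suc p) \<and> \<not> E t (P ! Suc p)"
  shows "card B + 1 < k"
proof (rule ccontr)
  let ?S = "insert x ((\<lambda>p. P ! Suc p) ` B)"
  assume "\<not> card B + 1 < k"
  moreover have "x \<notin> (\<lambda>p. P ! Suc p) ` B" "finite B"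
    using attach_successors_on_path[of "{x}"] x B finite_subset[OF B finite_attach_pos] by auto
  then have "card ?S = card B + 1"
    using card_image[OF inj_on_subset[OF inj_on_successor B]] by simp
  moreover have "?S \<subseteq> V"
    using attach_successors_on_path[of "{x}"] x B path(3) by blast
  moreover have "\<forall>a\<in>?S. \<forall>b\<in>?S. \<not> E a b"
    using attach_successors_nonadjacent[OF linked_off_path_singleton[OF x]]
      attach_successor_nonadjacent[OF linked_off_path_singleton[OF x]] B edge_irrefl
    by (auto simp: edge_commute[of _ x] subset_iff)
  moreover have "\<forall>a\<in>?S. \<not> E s a \<and> \<not> E t a"
    using apart st(2,3) by (auto simp: edge_commute[of _ x])
  ultimately have "has_induced V E (k + 2) P2_kP1_adj"
    using \<open>finite B\<close> by (intro has_induced_P2_kP1I[OF graph st(1), of ?S]) auto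
  then show False using free unfolding P2_kP1_free_def by blast
qed

lemma common_chords_card:
  assumes x: "x \<in> V - set P"
    and gap: "a < q" "Suc q < b" "b < length P" "\<forall>c. a < c \<and> c < b \<longrightarrow> \<not> E x (P ! c)"
  shows "card {p \<in> attach_pos {x}. E (P ! q) (P ! Suc p) \<and> E (P ! Suc q) (P ! Suc p)} \<le> 2"
    (is "card ?C \<le> 2")
proof -
  have side: "p \<le> a \<or> b \<le> p" if "p \<in> attach_pos {x}" for p
  proof -
    have "E x (P ! p)" using that by (simp add: attach_pos_def)
    then show ?thesis using gap(4) by (meson not_le)
  qed
  have crossing: False
    if pp': "p \<in> ?C" "p' \<in> ?C" "p < p'" "p' \<le> a \<or> b \<le> p" for p p'
  proof -
    have nbrs: "E x (P ! p)" "E x (P ! p')" "Suc p' < length P"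
      and chords: "E (P ! q) (P ! Suc p)" "E (P ! Suc q) (P ! Suc p')"
      using pp'(1,2) by (auto simp: attach_pos_def)
    consider "p' \<le> a" | "b \<le> p" using pp'(4) by blast
    then show False
    proof cases
      case 1
      show False
        by (rule no_chord_pair_before[OF x pp'(3) _ _ nbrs(1,2)])
          (use 1 gap chords in \<open>auto simp: edge_commute\<close>)
    next
      case 2
      show False
        by (rule no_chord_pair_after[OF x _ pp'(3) nbrs(3,1,2) chords]) (use 2 gap in auto)
    qed
  qed
  have "p = p'" if "p \<in> ?C" "p' \<in> ?C" "p \<le> a \<and> p' \<le> a \<or> b \<le> p \<and> b \<le> p'" for p p'
    using crossing[of p p'] crossing[of p' p] that by (cases p p' rule: linorder_cases) auto
  then have "card {p \<in> ?C. p \<le> a} \<le> 1" "card {p \<in> ?C. b \<le> p} \<le> 1"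
    using finite_attach_pos by (auto simp: card_le_Suc0_iff_eq)
  moreover have "?C = {p \<in> ?C. p \<le> a} \<union> {p \<in> ?C. b \<le> p}" using side by blast
  ultimately show ?thesis
    by (metis (no_types, lifting) card_Un_le one_add_one order_trans add_mono)
qed

lemma odd_successors_nonadjacent_step:
  assumes free: "P2_kP1_free V E k" and x: "x \<in> V - set P"
    and card_A: "2 * k \<le> card (attach_pos {x}) + 1"
    and gap: "a < s" "s + 2 < b" "b < length P" "\<forall>c. a < c \<and> c < b \<longrightarrow> \<not> E x (P ! c)"
    and prev: "\<forall>p\<in>attach_pos {x}. \<not> E (P ! s) (P ! Suc p)"
  shows "\<forall>p\<in>attach_pos {x}. \<not> E (P ! (s + 2)) (P ! Suc p)"
proof (intro ballI notI)
  let ?A = "attach_pos {x}"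
  define q where "q = Suc s"
  define X where "X = {p \<in> ?A. E (P ! q) (P ! Suc p)}"
  define Y where "Y = {p \<in> ?A. E (P ! Suc q) (P ! Suc p)}"
  fix p0 assume p0: "p0 \<in> ?A" and e0: "E (P ! (s + 2)) (P ! Suc p0)"
  have off_x: "\<not> E x (P ! c)" if "a < c" "c < b" for c using gap(4) that by blast
  have "card (?A - X) + 1 < k"
  proof (rule card_successors_avoiding_edge_less[OF free x _ path_edge])
    show "\<not> E x (P ! s)" "\<not> E x (P ! Suc s)" using off_x gap(1,2) by auto
    show "\<forall>p\<in>?A - X. \<not> E (P ! s) (P ! Suc p) \<and> \<not> E (P ! Suc s) (P ! Suc p)"
      using prev by (auto simp: X_def q_def)
  qed (use gap in auto)
  moreover have "card (?A - Y) + 1 < k"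
  proof (rule card_successors_avoiding_edge_less[OF free x _ e0])
    show "\<not> E x (P ! (s + 2))" using off_x gap(1,2) by auto
    show "\<not> E x (P ! Suc p0)"
      using attach_successor_nonadjacent[OF linked_off_path_singleton[OF x] _ p0] by simp
    show "\<forall>p\<in>?A - Y. \<not> E (P ! (s + 2)) (P ! Suc p) \<and> \<not> E (P ! Suc p0) (P ! Suc p)"
      using attach_successors_nonadjacent[OF linked_off_path_singleton[OF x] p0]
      by (auto simp: Y_def q_def numeral_2_eq_2)
  qed auto
  moreover have "card (X \<inter> Y) \<le> 2"
  proof -
    have "X \<inter> Y = {p \<in> ?A. E (P ! q) (P ! Suc p) \<and> E (P ! Suc q) (P ! Suc p)}"
      by (auto simp: X_def Y_def)
    then show ?thesis using common_chords_card[OF x, of a q b] gap unfolding q_def by simp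
  qed
  moreover have "X \<subseteq> ?A" "Y \<subseteq> ?A" "finite ?A" by (auto simp: X_def Y_def finite_attach_pos)
  then have "card X + card Y \<le> card ?A + card (X \<inter> Y)"
    "card (?A - X) = card ?A - card X" "card (?A - Y) = card ?A - card Y"
    using card_Un_Int[of X Y] card_mono[of ?A "X \<union> Y"]
    by (auto simp: card_Diff_subset finite_subset)
  ultimately show False using card_A by linarith
qed

lemma odd_successors_nonadjacent:
  assumes free: "P2_kP1_free V E k" and x: "x \<in> V - set P"
    and card_A: "2 * k \<le> card (attach_pos {x}) + 1"
    and gap: "b < length P" "E x (P ! a)" "\<forall>c. a < c \<and> c < b \<longrightarrow> \<not> E x (P ! c)"
    and m: "a + 2 * m + 1 < b"
  shows "\<forall>p\<in>attach_pos {x}. \<not> E (P ! (a + 2 * m + 1)) (P ! Suc p)"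
  using m
proof (induction m)
  case 0
  then have "a \<in> attach_pos {x}" using gap(1,2) by (auto simp: attach_pos_def)
  then show ?case
    using attach_successors_nonadjacent[OF linked_off_path_singleton[OF x]] by simp
next
  case (Suc m)
  then show ?case
    using odd_successors_nonadjacent_step[OF free x card_A, of a "a + 2 * m + 1" b] gap by (simp add: add.assoc)
qed

end

theorem mainTheorem6:
  fixes V :: "'a set" and E :: "'a \<Rightarrow> 'a \<Rightarrow> bool" and k :: nat
    and u v x :: 'a and P :: "'a list"
  assumes "simple_graph V E"
    and "k \<ge> 1"
    and "k_connected V E (2 * k)"
    and "P2_kP1_free V E k"
    and "u \<in> V" and "v \<in> V" and "u \<noteq> v"
    and "longest_uv_path V E u v P"
    and "set P \<noteq> V"
    and "x \<in> V - set P"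
  shows "\<forall>a b j. a < b \<and> b < length P \<and> E x (P ! a) \<and> E x (P ! b)
            \<and> (\<forall>c. a < c \<and> c < b \<longrightarrow> \<not> E x (P ! c))
            \<and> odd j \<and> 1 \<le> j \<and> j \<le> b - a - 1
          \<longrightarrow> (\<forall>w\<in>NP_plus E P x. \<not> E (P ! (a + j)) w)"
proof (intro allI impI)
  interpret longest_path V E u v P
    using assms(1,8) by unfold_locales
  fix a b j
  assume ab: "a < b \<and> b < length P \<and> E x (P ! a) \<and> E x (P ! b)
            \<and> (\<forall>c. a < c \<and> c < b \<longrightarrow> \<not> E x (P ! c))
            \<and> odd j \<and> 1 \<le> j \<and> j \<le> b - a - 1"
  then obtain m where m: "j = 2 * m + 1" by (meson oddE)
  have card_A: "2 * k \<le> card (attach_pos {x}) + 1"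
    by (rule card_neighbour_positions_ge[OF assms(4,2,3,7,10)])
  have "a + 2 * m + 1 < b" using ab m by linarith
  then have "\<forall>p\<in>attach_pos {x}. \<not> E (P ! (a + j)) (P ! Suc p)"
    using odd_successors_nonadjacent[OF assms(4,10) card_A, of b a] ab m by simp
  moreover have "NP_plus E P x = (\<lambda>p. P ! Suc p) ` attach_pos {x}"
    by (auto simp: NP_plus_def attach_pos_def)
  ultimately show "\<forall>w\<in>NP_plus E P x. \<not> E (P ! (a + j)) w" by simp
qed

end
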